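(* Let $(S,H)$ be a polarized K3 surface with $H^2=2d$, $d>0$ an integer, and let $\tau_d$ be the Hodge isometry of $\widetilde H(S,\mathbb Z)=H^0\oplus H^2\oplus H^4$ induced by the autoequivalence $\mathsf O_d=\mathsf T_{\mathcal O_S}\circ(-\otimes\mathcal O_S(H))$ of $D^b(S)$, i.e. $\tau_d(r,\Delta,s)=(-dr-H\cdot\Delta-s,\ rH+\Delta,\ -r)$. Then for a nonzero integer $n$, one has $\tau_d^{2n}=\mathrm{id}$ if and only if $(d,n)$ is one of $(1,3k)$, $(2,2k)$, $(3,3k)$ for some nonzero integer $k$.
   Context: $\mathsf T_{\mathcal O_S}$ denotes the spherical twist $F\mapsto\mathrm{Cone}(\mathrm{RHom}(\mathcal O_S,F)\otimes\mathcal O_S\to F)$. Elements of $\widetilde H(S,\mathbb Z)$ are written $(r,\Delta,s)$ with $r\in H^0$, $\Delta\in H^2(S,\mathbb Z)$, $s\in H^4$. *)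

theory Defs
  imports Main
begin

text \<open>The K3 lattice H^2(S,Z) = U^3 + E8(-1)^2, realised on Z^22, i.e. on
  integer vectors indexed by 0..21 (functions nat => int vanishing from 22 on).
  Indices 0..5: three hyperbolic planes U (pairs (0,1),(2,3),(4,5)).
  Indices 6..13 and 14..21: two copies of E8(-1), Dynkin diagram a chain
  0-1-2-3-4-5-6 with node 7 attached to node 4 (local numbering).\<close>

definition K3_lattice :: "(nat \<Rightarrow> int) set" where
  "K3_lattice = {v. \<forall>i\<ge>22. v i = 0}"

definition E8_adj :: "nat \<Rightarrow> nat \<Rightarrow> bool" where
  "E8_adj a b \<longleftrightarrow> (a < 7 \<and> b < 7 \<and> (a = b + 1 \<or> b = a + 1)) \<or>
                   (a = 4 \<and> b = 7) \<or> (a = 7 \<and> b = 4)"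

definition E8_neg_gram :: "nat \<Rightarrow> nat \<Rightarrow> int" where
  "E8_neg_gram a b = (if a = b then -2 else if E8_adj a b then 1 else 0)"

definition K3_gram :: "nat \<Rightarrow> nat \<Rightarrow> int" where
  "K3_gram i j =
    (if i < 6 \<and> j < 6 then (if i div 2 = j div 2 \<and> i \<noteq> j then 1 else 0)
     else if 6 \<le> i \<and> i < 14 \<and> 6 \<le> j \<and> j < 14 then E8_neg_gram (i - 6) (j - 6)
     else if 14 \<le> i \<and> i < 22 \<and> 14 \<le> j \<and> j < 22 then E8_neg_gram (i - 14) (j - 14)
     else 0)"

definition k3_form :: "(nat \<Rightarrow> int) \<Rightarrow> (nat \<Rightarrow> int) \<Rightarrow> int" where
  "k3_form v w = (\<Sum>i<22. \<Sum>j<22. v i * K3_gram i j * w j)"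

definition mukai_lattice :: "(int \<times> (nat \<Rightarrow> int) \<times> int) set" where
  "mukai_lattice = UNIV \<times> K3_lattice \<times> UNIV"

definition tau :: "int \<Rightarrow> (nat \<Rightarrow> int) \<Rightarrow> int \<times> (nat \<Rightarrow> int) \<times> int \<Rightarrow> int \<times> (nat \<Rightarrow> int) \<times> int" where
  "tau d H x = (case x of (r, D, s) \<Rightarrow>
      (- d * r - k3_form H D - s, (\<lambda>i. r * H i + D i), - r))"

definition tau_pow :: "int \<Rightarrow> (nat \<Rightarrow> int) \<Rightarrow> int \<Rightarrow> int \<times> (nat \<Rightarrow> int) \<times> int \<Rightarrow> int \<times> (nat \<Rightarrow> int) \<times> int" where
  "tau_pow d H m = (if 0 \<le> m then tau d H ^^ nat m
                    else inv_into mukai_lattice (tau d H) ^^ nat (- m))"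

end

theory Submission
  imports Defs
begin

text \<open>For fixed \<open>D\<close>, the vectors \<open>(r, D + c H, s)\<close> form a \<open>\<tau>\<^sub>d\<close>-stable family on which
  \<open>\<tau>\<^sub>d\<close> acts through an affine map of \<open>\<int>\<^sup>3\<close> depending only on \<open>a = H\<cdot>D\<close>, and every vector
  of the Mukai lattice lies in such a family (take \<open>c = 0\<close>). For \<open>d = 1, 3\<close> this map has
  order 6 and for \<open>d = 2\<close> order 4, which gives the periodic cases. In all other cases already
  \<open>(1, 0, 0)\<close> (where \<open>a = 0\<close>) is not fixed by \<open>\<tau>\<^sub>d\<^sup>2\<^sup>n\<close>: for \<open>d \<le> 3\<close> by direct computation, and
  for \<open>d \<ge> 4\<close> because \<open>\<tau>\<^sub>d\<^sup>2 = (-\<tau>\<^sub>d)\<^sup>2\<close> and along the orbit of \<open>-\<tau>\<^sub>d\<close> the functional \<open>r - s\<close> increases by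
  \<open>(d - 2) r + 2 d c + 2 s\<close>, which in turn increases by \<open>d - 4\<close> times the new value of \<open>r - s\<close>.\<close>

lemma funpow_left_inverse_fixes:
  assumes "f ` A \<subseteq> A" and "\<And>x. x \<in> A \<Longrightarrow> g (f x) = x" and "\<forall>x\<in>A. (f ^^ k) x = x"
  shows "\<forall>x\<in>A. (g ^^ k) x = x"
proof -
  have cancel: "(g ^^ n) ((f ^^ n) x) = x" if "x \<in> A" for n x
    using that
  proof (induction n arbitrary: x)
    case (Suc n)
    have "(g ^^ Suc n) ((f ^^ Suc n) x) = g ((g ^^ n) ((f ^^ n) (f x)))"
      by (simp add: funpow_swap1)
    also have "\<dots> = x"
      using Suc assms(1,2) by auto
    finally show ?case .
  qed simp
  show ?thesis
  proof
    fix x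
    assume "x \<in> A"
    then have "(g ^^ k) x = (g ^^ k) ((f ^^ k) x)"
      using assms(3) by simp
    also have "\<dots> = x"
      using cancel \<open>x \<in> A\<close> .
    finally show "(g ^^ k) x = x" .
  qed
qed

lemma bij_betw_funpow_inv_into_fixes_iff:
  assumes "bij_betw f A A"
  shows "(\<forall>x\<in>A. (inv_into A f ^^ k) x = x) \<longleftrightarrow> (\<forall>x\<in>A. (f ^^ k) x = x)"
proof
  have "inv_into A f ` A \<subseteq> A"
    using bij_betw_inv_into[OF assms] bij_betw_imp_surj_on by blast
  moreover have "\<And>x. x \<in> A \<Longrightarrow> f (inv_into A f x) = x"
    using bij_betw_inv_into_right[OF assms] .
  ultimately show "\<forall>x\<in>A. (f ^^ k) x = x" if "\<forall>x\<in>A. (inv_into A f ^^ k) x = x"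
    using funpow_left_inverse_fixes that by blast
next
  have "f ` A \<subseteq> A"
    using assms bij_betw_imp_surj_on by blast
  moreover have "\<And>x. x \<in> A \<Longrightarrow> inv_into A f (f x) = x"
    using bij_betw_inv_into_left[OF assms] .
  ultimately show "\<forall>x\<in>A. (inv_into A f ^^ k) x = x" if "\<forall>x\<in>A. (f ^^ k) x = x"
    using funpow_left_inverse_fixes that by blast
qed

lemma bij_betw_tau:
  assumes "H \<in> K3_lattice"
  shows "bij_betw (tau d H) mukai_lattice mukai_lattice"
proof (rule bij_betw_byWitness)
  define tau_inv where "tau_inv = (\<lambda>(r, D, s).
    (- s, \<lambda>i. D i + s * H i, d * s - k3_form H (\<lambda>i. D i + s * H i) - r))"
  show "\<forall>x\<in>mukai_lattice. tau_inv (tau d H x) = x"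
    by (simp add: tau_inv_def tau_def split: prod.split)
  show "\<forall>y\<in>mukai_lattice. tau d H (tau_inv y) = y"
    by (simp add: tau_inv_def tau_def split: prod.split)
  show "tau d H ` mukai_lattice \<subseteq> mukai_lattice"
    using assms by (auto simp: tau_def mukai_lattice_def K3_lattice_def)
  show "tau_inv ` mukai_lattice \<subseteq> mukai_lattice"
    using assms by (auto simp: tau_inv_def mukai_lattice_def K3_lattice_def)
qed

lemma tau_pow_fixes_iff:
  assumes "H \<in> K3_lattice"
  shows "(\<forall>x\<in>mukai_lattice. tau_pow d H m x = x) \<longleftrightarrow>
         (\<forall>x\<in>mukai_lattice. (tau d H ^^ nat \<bar>m\<bar>) x = x)"
  using bij_betw_funpow_inv_into_fixes_iff[OF bij_betw_tau[OF assms]]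
  by (simp add: tau_pow_def)

definition tau_coords :: "int \<Rightarrow> int \<Rightarrow> int \<times> int \<times> int \<Rightarrow> int \<times> int \<times> int" where
  "tau_coords d a = (\<lambda>(r, c, s). (- d * r - a - 2 * d * c - s, r + c, - r))"

definition mukai_of_coords ::
    "(nat \<Rightarrow> int) \<Rightarrow> (nat \<Rightarrow> int) \<Rightarrow> int \<times> int \<times> int \<Rightarrow> int \<times> (nat \<Rightarrow> int) \<times> int" where
  "mukai_of_coords H D = (\<lambda>(r, c, s). (r, \<lambda>i. D i + c * H i, s))"

lemma k3_form_add_smult_right:
  "k3_form H (\<lambda>i. D i + c * H i) = k3_form H D + c * k3_form H H"
  by (simp add: k3_form_def algebra_simps sum.distrib sum_distrib_left)

lemma tau_mukai_of_coords:
  assumes "k3_form H H = 2 * d"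
  shows "tau d H (mukai_of_coords H D v) = mukai_of_coords H D (tau_coords d (k3_form H D) v)"
  using assms
  by (cases v) (simp add: tau_def mukai_of_coords_def tau_coords_def k3_form_add_smult_right
      algebra_simps)

lemma funpow_tau_mukai_of_coords:
  assumes "k3_form H H = 2 * d"
  shows "(tau d H ^^ k) (mukai_of_coords H D v) =
         mukai_of_coords H D ((tau_coords d (k3_form H D) ^^ k) v)"
  by (induction k) (simp_all add: tau_mukai_of_coords[OF assms])

lemma tau_funpow_eq_id_if_tau_coords:
  assumes "k3_form H H = 2 * d" and "\<And>a. tau_coords d a ^^ k = id"
  shows "tau d H ^^ k = id"
proof
  fix x :: "int \<times> (nat \<Rightarrow> int) \<times> int"
  obtain r D s where x: "x = mukai_of_coords H D (r, 0, s)"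
    by (cases x) (simp add: mukai_of_coords_def)
  show "(tau d H ^^ k) x = id x"
    unfolding x funpow_tau_mukai_of_coords[OF assms(1)] assms(2) by simp
qed

lemma tau_coords_returns_if_tau_funpow_returns:
  assumes "k3_form H H = 2 * d" and "d \<noteq> 0"
    and "(tau d H ^^ k) (1, \<lambda>_. 0, 0) = (1, \<lambda>_. 0, 0)"
  shows "(tau_coords d 0 ^^ k) (1, 0, 0) = (1, 0, 0)"
proof -
  have "H \<noteq> (\<lambda>_. 0)"
    using assms(1,2) by (auto simp: k3_form_def)
  then obtain i where "H i \<noteq> 0"
    by auto
  have "mukai_of_coords H (\<lambda>_. 0) ((tau_coords d 0 ^^ k) (1, 0, 0)) = (1, \<lambda>_. 0, 0)"
    using funpow_tau_mukai_of_coords[OF assms(1), of k "\<lambda>_. 0" "(1, 0, 0)"] assms(3)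
    by (simp add: k3_form_def mukai_of_coords_def)
  then show ?thesis
    using \<open>H i \<noteq> 0\<close> by (auto simp: mukai_of_coords_def fun_eq_iff split: prod.splits)
qed

lemma tau_coords_funpow_eq_id:
  assumes "(d = 1 \<or> d = 3) \<and> 3 dvd j \<or> d = 2 \<and> 2 dvd j"
  shows "tau_coords d a ^^ (2 * j) = id"
proof -
  obtain p q where period: "tau_coords d a ^^ p = id" and "2 * j = p * q"
  proof (cases "d = 2")
    case True
    then have "tau_coords d a ^^ 4 = id"
      by (auto simp: fun_eq_iff tau_coords_def eval_nat_numeral algebra_simps)
    with that show ?thesis
      using assms True by (auto simp: dvd_def)
  next
    case False
    then have "tau_coords d a ^^ 6 = id"
      using assms by (auto simp: fun_eq_iff tau_coords_def eval_nat_numeral algebra_simps)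
    with that show ?thesis
      using assms False by (auto simp: dvd_def)
  qed
  then show ?thesis
    by (simp add: period funpow_mult[symmetric])
qed

definition neg_tau_coords :: "int \<Rightarrow> int \<times> int \<times> int \<Rightarrow> int \<times> int \<times> int" where
  "neg_tau_coords d = (\<lambda>(r, c, s). (d * r + 2 * d * c + s, - r - c, r))"

lemma tau_coords_funpow_even:
  "tau_coords d 0 ^^ (2 * j) = neg_tau_coords d ^^ (2 * j)"
proof -
  have "tau_coords d 0 ^^ 2 = neg_tau_coords d ^^ 2"
    by (auto simp: fun_eq_iff tau_coords_def neg_tau_coords_def eval_nat_numeral algebra_simps)
  then show ?thesis
    by (simp only: funpow_mult[symmetric])
qed

lemma neg_tau_coords_orbit_grows:
  assumes "d \<ge> 4"
  shows "case (neg_tau_coords d ^^ j) (1, 0, 0) of (r, c, s) \<Rightarrow>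
           r - s \<ge> 1 + 2 * int j \<and> (d - 2) * r + 2 * d * c + 2 * s \<ge> 2"
proof (induction j)
  case 0
  then show ?case
    using assms by simp
next
  case (Suc j)
  obtain r c s where rcs: "(neg_tau_coords d ^^ j) (1, 0, 0) = (r, c, s)"
    by (cases "(neg_tau_coords d ^^ j) (1, 0, 0)")
  define r' where "r' = d * r + 2 * d * c + s"
  have step: "(neg_tau_coords d ^^ Suc j) (1, 0, 0) = (r', - r - c, r)"
    using rcs by (simp add: neg_tau_coords_def r'_def)
  have growth: "r' - r = (r - s) + ((d - 2) * r + 2 * d * c + 2 * s)"
    by (simp add: r'_def algebra_simps)
  have gain: "(d - 2) * r' + 2 * d * (- r - c) + 2 * r =
              ((d - 2) * r + 2 * d * c + 2 * s) + (d - 4) * (r' - r)"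
    by (simp add: r'_def algebra_simps)
  have IH: "r - s \<ge> 1 + 2 * int j" "(d - 2) * r + 2 * d * c + 2 * s \<ge> 2"
    using Suc.IH rcs by simp_all
  then have "r' - r \<ge> 3 + 2 * int j"
    using growth by linarith
  moreover have "(d - 4) * (r' - r) \<ge> 0"
    using \<open>r' - r \<ge> 3 + 2 * int j\<close> assms by simp
  then have "(d - 2) * r' + 2 * d * (- r - c) + 2 * r \<ge> 2"
    using IH(2) gain by linarith
  ultimately show ?case
    unfolding step by simp
qed

lemma tau_coords_funpow_escapes:
  assumes "d > 0" and "j > 0" and "\<not> ((d = 1 \<or> d = 3) \<and> 3 dvd j \<or> d = 2 \<and> 2 dvd j)"
  shows "(tau_coords d 0 ^^ (2 * j)) (1, 0, 0) \<noteq> (1, 0, 0)"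
proof (cases "d \<ge> 4")
  case True
  obtain r c s where orbit: "(neg_tau_coords d ^^ (2 * j)) (1, 0, 0) = (r, c, s)"
    by (cases "(neg_tau_coords d ^^ (2 * j)) (1, 0, 0)")
  then have "r - s > 1"
    using neg_tau_coords_orbit_grows[OF True, of "2 * j"] \<open>j > 0\<close> by simp
  then show ?thesis
    using orbit by (auto simp: tau_coords_funpow_even)
next
  case False
  let ?F = "tau_coords d 0" and ?v = "(1, 0, 0) :: int \<times> int \<times> int"
  have "d = 1 \<or> d = 2 \<or> d = 3"
    using assms(1) False by auto
  then consider "d = 1 \<or> d = 3" "\<not> 3 dvd j" | "d = 2" "odd j"
    using assms(3) by auto
  then show ?thesis
  proof cases
    case 1
    have "(?F ^^ 6) ?v = ?v"
      using 1 by (auto simp: tau_coords_def eval_nat_numeral)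
    then have "(?F ^^ (2 * j)) ?v = (?F ^^ (2 * j mod 6)) ?v"
      by (simp add: funpow_mod_eq)
    moreover have "2 * j mod 6 = 2 \<or> 2 * j mod 6 = 4"
      using 1 by presburger
    moreover have "(?F ^^ 2) ?v \<noteq> ?v" "(?F ^^ 4) ?v \<noteq> ?v"
      using 1 by (auto simp: tau_coords_def eval_nat_numeral)
    ultimately show ?thesis
      by (elim disjE) simp_all
  next
    case 2
    have "(?F ^^ 4) ?v = ?v"
      using 2 by (simp add: tau_coords_def eval_nat_numeral)
    then have "(?F ^^ (2 * j)) ?v = (?F ^^ (2 * j mod 4)) ?v"
      by (simp add: funpow_mod_eq)
    moreover have "2 * j mod 4 = 2"
      using 2 by presburger
    moreover have "(?F ^^ 2) ?v \<noteq> ?v"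
      using 2 by (simp add: tau_coords_def eval_nat_numeral)
    ultimately show ?thesis
      by simp
  qed
qed

lemma tau_funpow_even_fixes_iff:
  assumes "d > 0" and "k3_form H H = 2 * d" and "j > 0"
  shows "(\<forall>x\<in>mukai_lattice. (tau d H ^^ (2 * j)) x = x) \<longleftrightarrow>
         (d = 1 \<or> d = 3) \<and> 3 dvd j \<or> d = 2 \<and> 2 dvd j"
proof
  assume "(d = 1 \<or> d = 3) \<and> 3 dvd j \<or> d = 2 \<and> 2 dvd j"
  then show "\<forall>x\<in>mukai_lattice. (tau d H ^^ (2 * j)) x = x"
    using tau_funpow_eq_id_if_tau_coords[OF assms(2) tau_coords_funpow_eq_id] by simp
next
  assume periodic: "\<forall>x\<in>mukai_lattice. (tau d H ^^ (2 * j)) x = x"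
  have "(1, \<lambda>_. 0, 0) \<in> mukai_lattice"
    by (simp add: mukai_lattice_def K3_lattice_def)
  then have "(tau_coords d 0 ^^ (2 * j)) (1, 0, 0) = (1, 0, 0)"
    using periodic assms tau_coords_returns_if_tau_funpow_returns by simp
  then show "(d = 1 \<or> d = 3) \<and> 3 dvd j \<or> d = 2 \<and> 2 dvd j"
    using tau_coords_funpow_escapes assms by blast
qed

theorem theoremA9:
  fixes d n :: int and H :: "nat \<Rightarrow> int"
  assumes "d > 0"
    and "H \<in> K3_lattice"
    and "k3_form H H = 2 * d"
    and "n \<noteq> 0"
  shows "(\<forall>x\<in>mukai_lattice. tau_pow d H (2 * n) x = x) \<longleftrightarrow>
         (\<exists>k::int. k \<noteq> 0 \<and> ((d = 1 \<and> n = 3 * k) \<or> (d = 2 \<and> n = 2 * k) \<or> (d = 3 \<and> n = 3 * k)))"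
proof -
  have "nat \<bar>2 * n\<bar> = 2 * nat \<bar>n\<bar>" and "nat \<bar>n\<bar> > 0"
    using assms(4) by (simp_all add: abs_mult nat_mult_distrib)
  then have "(\<forall>x\<in>mukai_lattice. tau_pow d H (2 * n) x = x) \<longleftrightarrow>
             (d = 1 \<or> d = 3) \<and> 3 dvd n \<or> d = 2 \<and> 2 dvd n"
    using tau_pow_fixes_iff[OF assms(2)] tau_funpow_even_fixes_iff[OF assms(1,3)] by simp
  also have "\<dots> \<longleftrightarrow>
      (\<exists>k::int. k \<noteq> 0 \<and> ((d = 1 \<and> n = 3 * k) \<or> (d = 2 \<and> n = 2 * k) \<or> (d = 3 \<and> n = 3 * k)))"
    using assms(4) by (auto simp: dvd_def)
  finally show ?thesis .
qed

end
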